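(* Let $t>0$. Consider a vehicle and a target with relative state $\Upsilon(k)=(\bm{q}(k),\bm{\vartheta}(k))\in\mathbb{R}^6$ (relative position and relative velocity in the world frame) evolving as $$\Upsilon(k+1)=A\Upsilon(k)+B\big(\bm{R}(k)\,{}^{b}\bm{u}_1(k)-\bar{\bm{u}}(k)\big),\quad A=\begin{bmatrix} I_3& tI_3\\ 0& I_3\end{bmatrix},\ B=\begin{bmatrix}\tfrac12 t^2 I_3\\ tI_3\end{bmatrix},$$ where $\bm{R}(k)\in SO(3)$ is the vehicle orientation and the target acceleration $\bar{\bm{u}}(k)$ is zero-mean Gaussian with covariance $W$ satisfying $\hat\sigma I_3\le W\le \check\sigma I_3$ for some $\hat\sigma,\check\sigma>0$, independent of the other quantities at time $k$. Let $\hat\Upsilon(k)=(\hat{\bm{q}}(k),\hat{\bm{\vartheta}}(k))$ be an estimate of $\Upsilon(k)$, let ${}^{b}\bm{q}^*\in\mathbb{R}^3$ be a desired relative position in the body frame, and apply the tracking control $${}^{b}\bm{u}_1(k)=-\frac{2\alpha}{t^2}\big(\bm{R}^{-1}(k)\hat{\bm{q}}(k)-{}^{b}\bm{q}^*\big)-\frac{2}{t}\bm{R}^{-1}(k)\hat{\bm{\vartheta}}(k).$$ Define the tracking error $\bm{e}(k)=\bm{q}(k)-\bm{R}(k)\,{}^{b}\bm{q}^*$ and $\bar\alpha=(\alpha I_3,\ tI_3)\in\mathbb{R}^{3\times 6}$, and assume $$\sigma:=\sup_k 2\,\mathbf{E}\big\{\|\bar\alpha(\Upsilon(k)-\hat\Upsilon(k))+(\bm{R}(k)-\bm{R}(k+1))\,{}^{b}\bm{q}^*\|^2\big\}<\infty.$$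 If $\alpha\in\big(1-\tfrac{1}{\sqrt2},\,1+\tfrac{1}{\sqrt2}\big)$, then $2(1-\alpha)^2-1<0$ and the tracking error is bounded in mean square: $\mathbf{E}\{\|\bm{e}(k)\|^2\}$ remains bounded for all $k$ (the vehicle maintains the desired relative position ${}^{b}\bm{q}^*$ up to a bounded error).
   Context: $SO(3)$ denotes the group of $3\times 3$ rotation matrices. $\mathbf{E}$ denotes expectation. The estimate $\hat\Upsilon(k)$ is produced by a Kalman filter, but the claim only uses the finiteness of $\sigma$. *)

theory Defs
  imports "HOL-Probability.Probability"
begin

definition SO3 :: "(real^3^3) set" where
  "SO3 = {Q. rotation_matrix Q}"

definition loewner_between :: "real \<Rightarrow> real^3^3 \<Rightarrow> real \<Rightarrow> bool" where
  "loewner_between a W b \<longleftrightarrow> transpose W = W \<and>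
     (\<forall>x::real^3. a * (x \<bullet> x) \<le> x \<bullet> (W *v x) \<and> x \<bullet> (W *v x) \<le> b * (x \<bullet> x))"

text \<open>A random vector X in R^3 is zero-mean Gaussian with covariance W (W positive definite):
  every nonzero linear functional of X is univariate normal with mean 0 and variance v' W v
  (Cramer-Wold characterisation of the multivariate normal law).\<close>
definition gaussian_vec :: "'a measure \<Rightarrow> ('a \<Rightarrow> real^3) \<Rightarrow> real^3^3 \<Rightarrow> bool" where
  "gaussian_vec M X W \<longleftrightarrow> X \<in> borel_measurable M \<and>
     (\<forall>v::real^3. v \<noteq> 0 \<longrightarrow>
        distributed M lborel (\<lambda>\<omega>. v \<bullet> X \<omega>) (normal_density 0 (sqrt (v \<bullet> (W *v v)))))"

definition track_ctrl :: "real \<Rightarrow> real \<Rightarrow> real^3 \<Rightarrow> real^3^3 \<Rightarrow> real^3 \<Rightarrow> real^3 \<Rightarrow> real^3" where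
  "track_ctrl t \<alpha> qs R qh vh =
     - ((2 * \<alpha> / t\<^sup>2) *\<^sub>R (matrix_inv R *v qh - qs)) - (2 / t) *\<^sub>R (matrix_inv R *v vh)"

text \<open>Independence of two random variables with possibly different (Borel) codomains
  (the library's indep_var forces equal codomain types).\<close>
definition indep_rv :: "'a measure \<Rightarrow> ('a \<Rightarrow> 'b::topological_space) \<Rightarrow> ('a \<Rightarrow> 'c::topological_space) \<Rightarrow> bool" where
  "indep_rv M X Y \<longleftrightarrow> X \<in> borel_measurable M \<and> Y \<in> borel_measurable M \<and>
     (\<forall>A\<in>sets borel. \<forall>B\<in>sets borel.
        measure M (X -` A \<inter> Y -` B \<inter> space M) =
        measure M (X -` A \<inter> space M) * measure M (Y -` B \<inter> space M))"

end

theory Submission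
  imports Defs
begin

text \<open>
  Substituting the control law, the estimated state enters only through the estimation error, and
  the tracking error obeys
  \<open>e(k+1) = (1 - \<alpha>) e(k) + d(k) - (t\<^sup>2/2) u(k)\<close>, where \<open>d(k)\<close> is the term whose mean square
  defines \<open>\<sigma>\<close> and \<open>u(k)\<close> is the target acceleration. The crude bound
  \<open>\<parallel>a + b\<parallel>\<^sup>2 \<le> 2\<parallel>a\<parallel>\<^sup>2 + 2\<parallel>b\<parallel>\<^sup>2\<close> gives
  \<open>E\<parallel>e(k+1)\<parallel>\<^sup>2 \<le> 2(1 - \<alpha>)\<^sup>2 E\<parallel>e(k)\<parallel>\<^sup>2 + 2\<sigma> + t\<^sup>4 tr W\<close>, a contraction exactly when
  \<open>\<bar>1 - \<alpha>\<bar> < 1/\<surd>2\<close>.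
\<close>

lemma nn_integral_square_normal:
  assumes Y: "distributed M lborel Y (normal_density 0 s)" and s: "0 < s"
  shows "(\<integral>\<^sup>+ \<omega>. ennreal ((Y \<omega>)\<^sup>2) \<partial>M) = ennreal (s\<^sup>2)"
proof -
  have "(\<integral>\<^sup>+ \<omega>. ennreal ((Y \<omega>)\<^sup>2) \<partial>M) = (\<integral>\<^sup>+ x. ennreal (normal_density 0 s x * x\<^sup>2) \<partial>lborel)"
    by (subst distributed_nn_integral[OF Y, symmetric]) (simp_all add: ennreal_mult')
  also have "\<dots> = ennreal (\<integral> x. normal_density 0 s x * x\<^sup>2 \<partial>lborel)"
    using integrable_normal_moment[OF s, of 0 2] by (intro nn_integral_eq_integral) auto
  also have "(\<integral> x. normal_density 0 s x * x\<^sup>2 \<partial>lborel) = s\<^sup>2"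
    using integral_normal_moment_even[OF s, of 0 1] by (simp add: power2_eq_square)
  finally show ?thesis .
qed

lemma loewner_between_pos_definite:
  assumes "loewner_between a W b" "0 < a" "x \<noteq> 0"
  shows "0 < x \<bullet> (W *v x)"
proof -
  have "a * (x \<bullet> x) \<le> x \<bullet> (W *v x)"
    using assms(1) by (simp add: loewner_between_def)
  moreover have "0 < a * (x \<bullet> x)"
    using assms(2,3) by simp
  ultimately show ?thesis by linarith
qed

lemma gaussian_vec_nn_integral_inner_sq:
  assumes X: "gaussian_vec M X W" and pd: "0 < x \<bullet> (W *v x)" and x: "x \<noteq> 0"
  shows "(\<integral>\<^sup>+ \<omega>. ennreal ((x \<bullet> X \<omega>)\<^sup>2) \<partial>M) = ennreal (x \<bullet> (W *v x))"
proof -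
  have "distributed M lborel (\<lambda>\<omega>. x \<bullet> X \<omega>) (normal_density 0 (sqrt (x \<bullet> (W *v x))))"
    using X x by (simp add: gaussian_vec_def)
  from nn_integral_square_normal[OF this] show ?thesis
    using pd by simp
qed

lemma gaussian_vec_nn_integral_norm_sq:
  assumes X: "gaussian_vec M X W" and pd: "\<And>x. x \<noteq> 0 \<Longrightarrow> 0 < x \<bullet> (W *v x)"
  shows "(\<integral>\<^sup>+ \<omega>. ennreal ((norm (X \<omega>))\<^sup>2) \<partial>M) = ennreal (trace W)"
proof -
  have [measurable]: "X \<in> borel_measurable M"
    using X by (simp add: gaussian_vec_def)
  have diag: "axis i 1 \<bullet> (W *v axis i 1) = W $ i $ i" for i :: 3
    by (simp add: inner_axis' inner_axis matrix_vector_mul_component)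
  have "(norm y)\<^sup>2 = (\<Sum>i\<in>UNIV. (axis i 1 \<bullet> y)\<^sup>2)" for y :: "real^3"
    unfolding power2_norm_eq_inner inner_vec_def[of y y] by (simp add: inner_axis' power2_eq_square)
  then have "(\<integral>\<^sup>+ \<omega>. ennreal ((norm (X \<omega>))\<^sup>2) \<partial>M)
      = (\<Sum>i\<in>UNIV. \<integral>\<^sup>+ \<omega>. ennreal ((axis i 1 \<bullet> X \<omega>)\<^sup>2) \<partial>M)"
    by (simp add: sum_ennreal[symmetric] nn_integral_sum del: sum_ennreal)
  also have "\<dots> = (\<Sum>i\<in>UNIV. ennreal (W $ i $ i))"
    using gaussian_vec_nn_integral_inner_sq[OF X pd] by (simp add: axis_eq_0_iff diag)
  also have "\<dots> = ennreal (trace W)"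
    using pd[of "axis _ 1"] by (simp add: trace_def diag axis_eq_0_iff less_imp_le)
  finally show ?thesis .
qed

lemma SO3_mult_matrix_inv:
  assumes "R \<in> SO3"
  shows "R *v (matrix_inv R *v x) = x"
proof -
  have "R ** transpose R = mat 1 \<and> transpose R ** R = mat 1"
    using assms by (auto simp: SO3_def rotation_matrix_def orthogonal_matrix_def)
  then have "R ** matrix_inv R = mat 1"
    unfolding matrix_inv_def by (rule someI2) simp
  then show ?thesis
    by (simp add: matrix_vector_mul_assoc)
qed

lemma SO3_norm_mult:
  assumes "R \<in> SO3"
  shows "norm (R *v x) = norm x"
proof -
  have "orthogonal_transformation ((*v) R)"
    using assms by (simp add: SO3_def rotation_matrix_def orthogonal_transformation_matrix)
  then show ?thesis
    by (rule orthogonal_transformation_norm)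
qed

lemma borel_measurable_matrix_vector_mult [measurable]:
  "f \<in> borel_measurable M \<Longrightarrow> (\<lambda>x. (f x :: real^'n^'m) *v c) \<in> borel_measurable M"
  by (rule borel_measurable_continuous_on[where f = "\<lambda>A. A *v c"])
     (auto simp: matrix_vector_mult_def intro!: continuous_intros)

lemma norm_add_sq_le:
  fixes x y :: "'v::real_normed_vector"
  shows "(norm (x + y))\<^sup>2 \<le> 2 * (norm x)\<^sup>2 + 2 * (norm y)\<^sup>2"
proof -
  have "(norm (x + y))\<^sup>2 \<le> (norm x + norm y)\<^sup>2"
    by (simp add: norm_triangle_ineq power_mono)
  also have "\<dots> \<le> 2 * (norm x)\<^sup>2 + 2 * (norm y)\<^sup>2"
    using sum_squares_bound[of "norm x" "norm y"] by (simp add: power2_sum)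
  finally show ?thesis .
qed

lemma norm_scaleR_add_diff_sq_le:
  fixes x y z :: "'v::real_normed_vector"
  shows "(norm (c *\<^sub>R x + y - z))\<^sup>2 \<le> 2 * c\<^sup>2 * (norm x)\<^sup>2 + 4 * (norm y)\<^sup>2 + 4 * (norm z)\<^sup>2"
proof -
  have "(norm (c *\<^sub>R x + (y - z)))\<^sup>2 \<le> 2 * (norm (c *\<^sub>R x))\<^sup>2 + 2 * (norm (y - z))\<^sup>2"
    by (rule norm_add_sq_le)
  moreover have "(norm (y - z))\<^sup>2 \<le> 2 * (norm y)\<^sup>2 + 2 * (norm z)\<^sup>2"
    using norm_add_sq_le[of y "- z"] by simp
  ultimately show ?thesis
    by (simp add: power_mult_distrib algebra_simps)
qed

lemma track_ctrl_error_step: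
  assumes t: "0 < t" and R: "R \<in> SO3"
  shows "q + t *\<^sub>R v + (t\<^sup>2 / 2) *\<^sub>R (R *v track_ctrl t \<alpha> qs R qh vh - u) - R' *v qs
       = (1 - \<alpha>) *\<^sub>R (q - R *v qs) + (\<alpha> *\<^sub>R (q - qh) + t *\<^sub>R (v - vh) + (R - R') *v qs)
         - (t\<^sup>2 / 2) *\<^sub>R u"
proof -
  have "(t\<^sup>2 / 2) *\<^sub>R (R *v track_ctrl t \<alpha> qs R qh vh) = - \<alpha> *\<^sub>R (qh - R *v qs) - t *\<^sub>R vh"
    using t
    by (simp add: track_ctrl_def SO3_mult_matrix_inv[OF R] matrix_vector_mult_diff_distrib
        matrix_vector_mult_scaleR linear_neg[OF matrix_vector_mul_linear] scaleR_diff_right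
        power2_eq_square)
  then show ?thesis
    by (simp add: scaleR_diff_right algebra_simps matrix_vector_mult_diff_rdistrib)
qed

lemma contractive_recurrence_SUP_finite:
  fixes E :: "nat \<Rightarrow> ennreal"
  assumes step: "\<And>k. E (Suc k) \<le> ennreal c * E k + K"
    and c: "0 \<le> c" "c < 1" and E0: "E 0 < \<infinity>" and K: "K < \<infinity>"
  shows "(SUP k. E k) < \<infinity>"
proof -
  obtain e0 where e0: "0 \<le> e0" "E 0 = ennreal e0"
    using E0 by (cases "E 0") auto
  obtain k0 where k0: "0 \<le> k0" "K = ennreal k0"
    using K by (cases K) auto
  define B where "B = max e0 (k0 / (1 - c))"
  have "k0 / (1 - c) \<le> B"
    by (simp add: B_def)
  then have "k0 \<le> (1 - c) * B"
    using c by (simp add: pos_divide_le_eq mult.commute)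
  then have invariant: "c * B + k0 \<le> B"
    by (simp add: algebra_simps)
  have "E k \<le> ennreal B" for k
  proof (induction k)
    case 0
    show ?case using e0 by (simp add: B_def)
  next
    case (Suc k)
    have "E (Suc k) \<le> ennreal c * E k + ennreal k0"
      using step[of k] k0(2) by simp
    also have "\<dots> \<le> ennreal c * ennreal B + ennreal k0"
      using Suc.IH by (intro add_right_mono mult_left_mono) auto
    also have "\<dots> = ennreal (c * B + k0)"
      using c e0 k0 by (simp add: B_def ennreal_plus ennreal_mult)
    also have "\<dots> \<le> ennreal B"
      using invariant by (rule ennreal_leI)
    finally show ?case .
  qed
  then have "(SUP k. E k) \<le> ennreal B"
    by (rule SUP_least)
  then show ?thesis
    by (rule le_less_trans) simp
qed

locale tracking_loop = prob_space M
  for M :: "'a measure" +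
  fixes t \<alpha> :: real
    and q v qh vh ubar :: "nat \<Rightarrow> 'a \<Rightarrow> real^3"
    and R :: "nat \<Rightarrow> 'a \<Rightarrow> real^3^3"
    and qs :: "real^3"
  assumes t_pos: "0 < t"
    and meas: "\<And>k. q k \<in> borel_measurable M" "\<And>k. v k \<in> borel_measurable M"
      "\<And>k. qh k \<in> borel_measurable M" "\<And>k. vh k \<in> borel_measurable M"
      "\<And>k. R k \<in> borel_measurable M" "\<And>k. ubar k \<in> borel_measurable M"
    and rot: "\<And>k \<omega>. \<omega> \<in> space M \<Longrightarrow> R k \<omega> \<in> SO3"
    and dyn_q: "\<And>k \<omega>. \<omega> \<in> space M \<Longrightarrow>
      q (Suc k) \<omega> = q k \<omega> + t *\<^sub>R v k \<omega>
        + (t\<^sup>2 / 2) *\<^sub>R (R k \<omega> *v track_ctrl t \<alpha> qs (R k \<omega>) (qh k \<omega>) (vh k \<omega>) - ubar k \<omega>)"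
begin

declare meas [measurable]

definition tracking_error :: "nat \<Rightarrow> 'a \<Rightarrow> real^3" where
  "tracking_error k \<omega> = q k \<omega> - R k \<omega> *v qs"

definition disturbance :: "nat \<Rightarrow> 'a \<Rightarrow> real^3" where
  "disturbance k \<omega> =
    \<alpha> *\<^sub>R (q k \<omega> - qh k \<omega>) + t *\<^sub>R (v k \<omega> - vh k \<omega>) + (R k \<omega> - R (Suc k) \<omega>) *v qs"

lemma tracking_error_Suc:
  assumes "\<omega> \<in> space M"
  shows "tracking_error (Suc k) \<omega>
    = (1 - \<alpha>) *\<^sub>R tracking_error k \<omega> + disturbance k \<omega> - (t\<^sup>2 / 2) *\<^sub>R ubar k \<omega>"
  unfolding tracking_error_def disturbance_def dyn_q[OF assms]
  by (rule track_ctrl_error_step[OF t_pos rot[OF assms]])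

lemma mean_square_error_Suc:
  "(\<integral>\<^sup>+ \<omega>. ennreal ((norm (tracking_error (Suc k) \<omega>))\<^sup>2) \<partial>M)
    \<le> ennreal (2 * (1 - \<alpha>)\<^sup>2) * (\<integral>\<^sup>+ \<omega>. ennreal ((norm (tracking_error k \<omega>))\<^sup>2) \<partial>M)
      + 4 * (\<integral>\<^sup>+ \<omega>. ennreal ((norm (disturbance k \<omega>))\<^sup>2) \<partial>M)
      + ennreal (t ^ 4) * (\<integral>\<^sup>+ \<omega>. ennreal ((norm (ubar k \<omega>))\<^sup>2) \<partial>M)"
proof -
  have [measurable]: "tracking_error k \<in> borel_measurable M" "disturbance k \<in> borel_measurable M"
    unfolding tracking_error_def[abs_def] disturbance_def[abs_def] by measurable
  have "ennreal ((norm (tracking_error (Suc k) \<omega>))\<^sup>2)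
    \<le> ennreal (2 * (1 - \<alpha>)\<^sup>2) * ennreal ((norm (tracking_error k \<omega>))\<^sup>2)
      + 4 * ennreal ((norm (disturbance k \<omega>))\<^sup>2)
      + ennreal (t ^ 4) * ennreal ((norm (ubar k \<omega>))\<^sup>2)"
    if "\<omega> \<in> space M" for \<omega>
  proof -
    have "(norm (tracking_error (Suc k) \<omega>))\<^sup>2 \<le> 2 * (1 - \<alpha>)\<^sup>2 * (norm (tracking_error k \<omega>))\<^sup>2
      + 4 * (norm (disturbance k \<omega>))\<^sup>2 + t ^ 4 * (norm (ubar k \<omega>))\<^sup>2" (is "_ \<le> ?bound")
      using norm_scaleR_add_diff_sq_le[of "1 - \<alpha>" "tracking_error k \<omega>" "disturbance k \<omega>"
          "(t\<^sup>2 / 2) *\<^sub>R ubar k \<omega>"]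
      by (simp add: tracking_error_Suc[OF that] power_mult_distrib power_divide flip: power_mult)
    then have "ennreal ((norm (tracking_error (Suc k) \<omega>))\<^sup>2) \<le> ennreal ?bound"
      by (rule ennreal_leI)
    also have "\<dots> = ennreal (2 * (1 - \<alpha>)\<^sup>2) * ennreal ((norm (tracking_error k \<omega>))\<^sup>2)
      + 4 * ennreal ((norm (disturbance k \<omega>))\<^sup>2)
      + ennreal (t ^ 4) * ennreal ((norm (ubar k \<omega>))\<^sup>2)"
      by (simp add: ennreal_plus ennreal_mult)
    finally show ?thesis .
  qed
  then have "(\<integral>\<^sup>+ \<omega>. ennreal ((norm (tracking_error (Suc k) \<omega>))\<^sup>2) \<partial>M)
    \<le> (\<integral>\<^sup>+ \<omega>. ennreal (2 * (1 - \<alpha>)\<^sup>2) * ennreal ((norm (tracking_error k \<omega>))\<^sup>2)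
      + 4 * ennreal ((norm (disturbance k \<omega>))\<^sup>2)
      + ennreal (t ^ 4) * ennreal ((norm (ubar k \<omega>))\<^sup>2) \<partial>M)"
    by (intro nn_integral_mono)
  also have "\<dots> = ennreal (2 * (1 - \<alpha>)\<^sup>2) * (\<integral>\<^sup>+ \<omega>. ennreal ((norm (tracking_error k \<omega>))\<^sup>2) \<partial>M)
      + 4 * (\<integral>\<^sup>+ \<omega>. ennreal ((norm (disturbance k \<omega>))\<^sup>2) \<partial>M)
      + ennreal (t ^ 4) * (\<integral>\<^sup>+ \<omega>. ennreal ((norm (ubar k \<omega>))\<^sup>2) \<partial>M)"
    by (simp add: nn_integral_add nn_integral_cmult)
  finally show ?thesis .
qed

lemma mean_square_error_0_finite:
  assumes "(\<integral>\<^sup>+ \<omega>. ennreal ((norm (q 0 \<omega>))\<^sup>2 + (norm (v 0 \<omega>))\<^sup>2) \<partial>M) < \<infinity>"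
  shows "(\<integral>\<^sup>+ \<omega>. ennreal ((norm (tracking_error 0 \<omega>))\<^sup>2) \<partial>M) < \<infinity>"
proof -
  have "ennreal ((norm (tracking_error 0 \<omega>))\<^sup>2)
      \<le> 2 * ennreal ((norm (q 0 \<omega>))\<^sup>2 + (norm (v 0 \<omega>))\<^sup>2) + ennreal (2 * (norm qs)\<^sup>2)"
    if "\<omega> \<in> space M" for \<omega>
  proof -
    have "(norm (tracking_error 0 \<omega>))\<^sup>2 \<le> 2 * (norm (q 0 \<omega>))\<^sup>2 + 2 * (norm qs)\<^sup>2"
      using norm_add_sq_le[of "q 0 \<omega>" "- (R 0 \<omega> *v qs)"] SO3_norm_mult[OF rot[OF that]]
      by (simp add: tracking_error_def)
    also have "\<dots> \<le> 2 * ((norm (q 0 \<omega>))\<^sup>2 + (norm (v 0 \<omega>))\<^sup>2) + 2 * (norm qs)\<^sup>2"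
      by simp
    finally have "ennreal ((norm (tracking_error 0 \<omega>))\<^sup>2)
        \<le> ennreal (2 * ((norm (q 0 \<omega>))\<^sup>2 + (norm (v 0 \<omega>))\<^sup>2) + 2 * (norm qs)\<^sup>2)"
      by (rule ennreal_leI)
    also have "\<dots> = 2 * ennreal ((norm (q 0 \<omega>))\<^sup>2 + (norm (v 0 \<omega>))\<^sup>2) + ennreal (2 * (norm qs)\<^sup>2)"
      by (simp add: ennreal_plus ennreal_mult)
    finally show ?thesis .
  qed
  then have "(\<integral>\<^sup>+ \<omega>. ennreal ((norm (tracking_error 0 \<omega>))\<^sup>2) \<partial>M)
      \<le> (\<integral>\<^sup>+ \<omega>. 2 * ennreal ((norm (q 0 \<omega>))\<^sup>2 + (norm (v 0 \<omega>))\<^sup>2) + ennreal (2 * (norm qs)\<^sup>2) \<partial>M)"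
    by (intro nn_integral_mono)
  also have "\<dots> = 2 * (\<integral>\<^sup>+ \<omega>. ennreal ((norm (q 0 \<omega>))\<^sup>2 + (norm (v 0 \<omega>))\<^sup>2) \<partial>M)
      + ennreal (2 * (norm qs)\<^sup>2)"
    by (simp add: nn_integral_add nn_integral_cmult emeasure_space_1)
  also have "\<dots> < \<infinity>"
    using assms by (simp add: ennreal_mult_less_top)
  finally show ?thesis .
qed


lemma mean_square_error_SUP_finite:
  assumes contraction: "2 * (1 - \<alpha>)\<^sup>2 < 1"
    and init: "(\<integral>\<^sup>+ \<omega>. ennreal ((norm (q 0 \<omega>))\<^sup>2 + (norm (v 0 \<omega>))\<^sup>2) \<partial>M) < \<infinity>"
    and disturbance_fin: "(SUP k. 2 * (\<integral>\<^sup>+ \<omega>. ennreal ((norm (disturbance k \<omega>))\<^sup>2) \<partial>M)) < \<infinity>"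
    and noise: "\<And>k. (\<integral>\<^sup>+ \<omega>. ennreal ((norm (ubar k \<omega>))\<^sup>2) \<partial>M) \<le> N" and noise_fin: "N < \<infinity>"
  shows "(SUP k. \<integral>\<^sup>+ \<omega>. ennreal ((norm (tracking_error k \<omega>))\<^sup>2) \<partial>M) < \<infinity>"
proof -
  define \<sigma> where "\<sigma> = (SUP k. 2 * (\<integral>\<^sup>+ \<omega>. ennreal ((norm (disturbance k \<omega>))\<^sup>2) \<partial>M))"
  have step: "(\<integral>\<^sup>+ \<omega>. ennreal ((norm (tracking_error (Suc k) \<omega>))\<^sup>2) \<partial>M)
      \<le> ennreal (2 * (1 - \<alpha>)\<^sup>2) * (\<integral>\<^sup>+ \<omega>. ennreal ((norm (tracking_error k \<omega>))\<^sup>2) \<partial>M)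
        + (2 * \<sigma> + ennreal (t ^ 4) * N)" for k
  proof -
    have "2 * (\<integral>\<^sup>+ \<omega>. ennreal ((norm (disturbance k \<omega>))\<^sup>2) \<partial>M) \<le> \<sigma>" (is "2 * ?D \<le> _")
      unfolding \<sigma>_def by (rule SUP_upper) simp
    then have "2 * (2 * ?D) \<le> 2 * \<sigma>"
      by (rule mult_left_mono) simp
    then have "4 * ?D \<le> 2 * \<sigma>"
      by (simp add: mult.assoc[symmetric])
    have "(\<integral>\<^sup>+ \<omega>. ennreal ((norm (tracking_error (Suc k) \<omega>))\<^sup>2) \<partial>M)
      \<le> ennreal (2 * (1 - \<alpha>)\<^sup>2) * (\<integral>\<^sup>+ \<omega>. ennreal ((norm (tracking_error k \<omega>))\<^sup>2) \<partial>M)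
        + (4 * ?D + ennreal (t ^ 4) * (\<integral>\<^sup>+ \<omega>. ennreal ((norm (ubar k \<omega>))\<^sup>2) \<partial>M))"
      using mean_square_error_Suc[of k] unfolding add.assoc .
    also have "\<dots> \<le> ennreal (2 * (1 - \<alpha>)\<^sup>2) * (\<integral>\<^sup>+ \<omega>. ennreal ((norm (tracking_error k \<omega>))\<^sup>2) \<partial>M)
        + (2 * \<sigma> + ennreal (t ^ 4) * N)"
      using \<open>4 * ?D \<le> 2 * \<sigma>\<close> noise[of k] by (intro add_left_mono add_mono mult_left_mono) auto
    finally show ?thesis .
  qed
  have "2 * \<sigma> + ennreal (t ^ 4) * N < \<infinity>"
    using disturbance_fin noise_fin by (simp add: \<sigma>_def ennreal_mult_less_top)
  from contractive_recurrence_SUP_finite[OF step _ contraction mean_square_error_0_finite[OF init] this]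
  show ?thesis
    by simp
qed
end

theorem mainTheorem2:
  fixes M :: "'a measure"
    and t \<alpha> sig_lo sig_hi :: real
    and q v qh vh ubar :: "nat \<Rightarrow> 'a \<Rightarrow> real^3"
    and R :: "nat \<Rightarrow> 'a \<Rightarrow> real^3^3"
    and W :: "real^3^3"
    and qs :: "real^3"
  assumes "prob_space M"
    and t_pos: "t > 0"
    and meas: "\<And>k. q k \<in> borel_measurable M" "\<And>k. v k \<in> borel_measurable M"
              "\<And>k. qh k \<in> borel_measurable M" "\<And>k. vh k \<in> borel_measurable M"
              "\<And>k. R k \<in> borel_measurable M"
    and rot: "\<And>k \<omega>. \<omega> \<in> space M \<Longrightarrow> R k \<omega> \<in> SO3"
    and dyn_q: "\<And>k \<omega>. \<omega> \<in> space M \<Longrightarrow>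
        q (Suc k) \<omega> = q k \<omega> + t *\<^sub>R v k \<omega>
          + (t\<^sup>2 / 2) *\<^sub>R (R k \<omega> *v track_ctrl t \<alpha> qs (R k \<omega>) (qh k \<omega>) (vh k \<omega>) - ubar k \<omega>)"
    and dyn_v: "\<And>k \<omega>. \<omega> \<in> space M \<Longrightarrow>
        v (Suc k) \<omega> = v k \<omega>
          + t *\<^sub>R (R k \<omega> *v track_ctrl t \<alpha> qs (R k \<omega>) (qh k \<omega>) (vh k \<omega>) - ubar k \<omega>)"
    and sig_pos: "sig_lo > 0" "sig_hi > 0"
    and W_bnd: "loewner_between sig_lo W sig_hi"
    and gauss: "\<And>k. gaussian_vec M (ubar k) W"
    and indep: "\<And>k. indep_rv M (ubar k)
                   (\<lambda>\<omega>. (q k \<omega>, v k \<omega>, qh k \<omega>, vh k \<omega>, R k \<omega>))"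
    and init: "(\<integral>\<^sup>+ \<omega>. ennreal ((norm (q 0 \<omega>))\<^sup>2 + (norm (v 0 \<omega>))\<^sup>2) \<partial>M) < \<infinity>"
    and sigma_fin: "(SUP k. 2 * (\<integral>\<^sup>+ \<omega>. ennreal ((norm (\<alpha> *\<^sub>R (q k \<omega> - qh k \<omega>)
                      + t *\<^sub>R (v k \<omega> - vh k \<omega>)
                      + (R k \<omega> - R (Suc k) \<omega>) *v qs))\<^sup>2) \<partial>M)) < \<infinity>"
    and alpha_rng: "1 - 1 / sqrt 2 < \<alpha>" "\<alpha> < 1 + 1 / sqrt 2"
  shows "2 * (1 - \<alpha>)\<^sup>2 - 1 < 0 \<and>
         (SUP k. \<integral>\<^sup>+ \<omega>. ennreal ((norm (q k \<omega> - R k \<omega> *v qs))\<^sup>2) \<partial>M) < \<infinity>"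
proof -
  have "ubar k \<in> borel_measurable M" for k
    using gauss[of k] by (simp add: gaussian_vec_def)
  then interpret tracking_loop M t \<alpha> q v qh vh ubar R qs
    by (intro tracking_loop.intro tracking_loop_axioms.intro assms(1) t_pos meas rot dyn_q)
  have "\<bar>1 - \<alpha>\<bar> < 1 / sqrt 2"
    using alpha_rng by auto
  then have "\<bar>1 - \<alpha>\<bar>\<^sup>2 < (1 / sqrt 2)\<^sup>2"
    by (intro power_strict_mono) auto
  then have contraction: "2 * (1 - \<alpha>)\<^sup>2 < 1"
    by (simp add: power_divide)
  have "(\<integral>\<^sup>+ \<omega>. ennreal ((norm (ubar k \<omega>))\<^sup>2) \<partial>M) = ennreal (trace W)" for k
    using gaussian_vec_nn_integral_norm_sq[OF gauss loewner_between_pos_definite[OF W_bnd sig_pos(1)]] .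
  then have "(SUP k. \<integral>\<^sup>+ \<omega>. ennreal ((norm (tracking_error k \<omega>))\<^sup>2) \<partial>M) < \<infinity>"
    using sigma_fin
    by (intro mean_square_error_SUP_finite[OF contraction init, of "ennreal (trace W)"])
       (simp_all add: disturbance_def)
  with contraction show ?thesis
    by (simp add: tracking_error_def)
qed

end
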